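(* Let $M$ be a finite $\mathcal J$-above semigroup. Then $W(M^I)=\{m\in M^I:\mathcal L_m=\mathcal H_m\}$ is a union of $\mathcal J$-classes of $M^I$.
   Context: $M^I$ is $M$ with a new identity $I$ adjoined; $\mathcal L_m,\mathcal H_m$ denote the $\mathcal L$- and $\mathcal H$-classes of $m$ in $M^I$. A semigroup $M$ is finite $\mathcal J$-above if $\{y\in M: y\ge_{\mathcal J}x\}$ is finite for every $x\in M$. *)

theory Defs
  imports Main
begin

text \<open>The monoid M^I: M (a type of class semigroup_mult) with a new identity
  adjoined, represented as 'a option with None the adjoined identity I.\<close>

definition mulI :: "'a::semigroup_mult option \<Rightarrow> 'a option \<Rightarrow> 'a option" where
  "mulI x y = (case x of None \<Rightarrow> y
     | Some a \<Rightarrow> (case y of None \<Rightarrow> Some a | Some b \<Rightarrow> Some (a * b)))"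

definition L_rel :: "'a::semigroup_mult option \<Rightarrow> 'a option \<Rightarrow> bool" where
  "L_rel x y \<longleftrightarrow> (\<exists>s. mulI s x = y) \<and> (\<exists>s. mulI s y = x)"

definition R_rel :: "'a::semigroup_mult option \<Rightarrow> 'a option \<Rightarrow> bool" where
  "R_rel x y \<longleftrightarrow> (\<exists>s. mulI x s = y) \<and> (\<exists>s. mulI y s = x)"

definition H_rel :: "'a::semigroup_mult option \<Rightarrow> 'a option \<Rightarrow> bool" where
  "H_rel x y \<longleftrightarrow> L_rel x y \<and> R_rel x y"

definition J_le :: "'a::semigroup_mult option \<Rightarrow> 'a option \<Rightarrow> bool" where
  "J_le x y \<longleftrightarrow> (\<exists>s t. x = mulI (mulI s y) t)"

definition J_rel :: "'a::semigroup_mult option \<Rightarrow> 'a option \<Rightarrow> bool" where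
  "J_rel x y \<longleftrightarrow> J_le x y \<and> J_le y x"

definition L_class :: "'a::semigroup_mult option \<Rightarrow> 'a option set" where
  "L_class m = {x. L_rel x m}"

definition H_class :: "'a::semigroup_mult option \<Rightarrow> 'a option set" where
  "H_class m = {x. H_rel x m}"

text \<open>M finite J-above: for each x in M, {y in M. y \<ge>_J x} is finite.
  (For elements of M, \<le>_J in M coincides with \<le>_J in M^I.)\<close>
definition finite_J_above :: "'a::semigroup_mult itself \<Rightarrow> bool" where
  "finite_J_above _ \<longleftrightarrow> (\<forall>x::'a. finite {y::'a. J_le (Some x) (Some y)})"

definition W_set :: "'a::semigroup_mult option set" where
  "W_set = {m. L_class m = H_class m}"

end

theory Submission
  imports Defs
begin

(* The finiteness hypothesis makes
   M^I "stable": if x = a x b then x = x b^d and x = a^d x for some d > 0,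
   because the elements x b^k (and a^k x) all lie J-above x, so by the
   pigeonhole principle the sequence is eventually periodic.  Stability gives
   that x J xy implies x R xy and x J yx implies x L yx, hence J is contained
   in R composed with L: if m J n then m R p and p L n for p = m t, where
   n = s m t.  Finally, with no finiteness assumption, W(M^I) is closed under
   R (an L-class argument transporting the witness along m R p) and under L
   (W is by definition a union of L-classes). *)

text \<open>M^I is a monoid with product mulI and identity None; registering it as
  such gives the monoid laws and powers of the library for free.\<close>
instantiation option :: (semigroup_mult) monoid_mult
begin

definition times_option :: "'a option \<Rightarrow> 'a option \<Rightarrow> 'a option" where
  "times_option = mulI"

definition one_option :: "'a option" where
  "one_option = None"

instance
  by standard (auto simp: times_option_def one_option_def mulI_def mult.assoc
      split: option.splits)

end

lemma times_eq_None_iff: "(x :: 'a::semigroup_mult option) * y = None \<longleftrightarrow> x = None \<and> y = None"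
  by (cases x; cases y) (simp_all add: times_option_def mulI_def)

lemma mulI_eq_times [simp]: "mulI x y = x * y"
  by (simp add: times_option_def)

lemma L_rel_iff: "L_rel x y \<longleftrightarrow> (\<exists>s. s * x = y) \<and> (\<exists>s. s * y = x)"
  by (simp add: L_rel_def)

lemma R_rel_iff: "R_rel x y \<longleftrightarrow> (\<exists>s. x * s = y) \<and> (\<exists>s. y * s = x)"
  by (simp add: R_rel_def)

lemma J_le_iff: "J_le x y \<longleftrightarrow> (\<exists>s t. x = s * y * t)"
  by (simp add: J_le_def)

lemma L_rel_sym: "L_rel x y \<Longrightarrow> L_rel y x"
  unfolding L_rel_def by blast

lemma L_rel_trans: "L_rel x y \<Longrightarrow> L_rel y z \<Longrightarrow> L_rel x z"
  unfolding L_rel_iff by (metis mult.assoc)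

lemma R_rel_sym: "R_rel x y \<Longrightarrow> R_rel y x"
  unfolding R_rel_def by blast

lemma R_rel_trans: "R_rel x y \<Longrightarrow> R_rel y z \<Longrightarrow> R_rel x z"
  unfolding R_rel_iff by (metis mult.assoc)

lemma W_set_iff: "m \<in> W_set \<longleftrightarrow> (\<forall>x. L_rel x m \<longrightarrow> R_rel x m)"
  unfolding W_set_def L_class_def H_class_def H_rel_def by blast

section \<open>Stability of finite J-above monoids\<close>

lemma finite_J_above_option:
  assumes "finite_J_above TYPE('a::semigroup_mult)"
  shows "finite {y :: 'a option. J_le x y}"
proof (cases x)
  case None
  have "y = None" if "J_le None y" for y :: "'a option"
  proof -
    from that obtain s t where "s * y * t = None" unfolding J_le_iff by metis
    then show ?thesis by (simp add: times_eq_None_iff)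
  qed
  then have "{y. J_le x y} \<subseteq> {None}" using None by blast
  then show ?thesis by (rule finite_subset) simp
next
  case (Some c)
  have "{y. J_le x y} \<subseteq> insert None (Some ` {b. J_le (Some c) (Some b)})"
  proof
    fix y assume "y \<in> {y. J_le x y}"
    then show "y \<in> insert None (Some ` {b. J_le (Some c) (Some b)})"
      using Some by (cases y) auto
  qed
  moreover have "finite {b. J_le (Some c) (Some b)}"
    using assms unfolding finite_J_above_def by blast
  ultimately show ?thesis by (meson finite_imageI finite_insert finite_subset)
qed

lemma two_sided_iterate:
  fixes x :: "'a::monoid_mult"
  assumes x: "x = a * x * b"
  shows "x = a ^ k * x * b ^ k"
proof (induction k)
  case 0 then show ?case by simp
next
  case (Suc k)
  have "x = a ^ k * x * b ^ k" by (fact Suc.IH)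
  also have "\<dots> = a ^ k * (a * x * b) * b ^ k"
    using x by (rule arg_cong[where f = "\<lambda>z. a ^ k * z * b ^ k"])
  also have "\<dots> = (a ^ k * a) * x * (b * b ^ k)" by (simp only: mult.assoc)
  also have "\<dots> = a ^ Suc k * x * b ^ Suc k" by (simp only: power_Suc[of b] power_Suc2[of a])
  finally show ?case .
qed

lemma finite_range_repeats:
  fixes F :: "nat \<Rightarrow> 'b"
  assumes "finite (range F)"
  shows "\<exists>i d. 0 < d \<and> F i = F (i + d)"
proof -
  have "\<not> inj F" using assms finite_imageD[of F UNIV] infinite_UNIV_nat by blast
  then obtain i j where "i \<noteq> j" "F i = F j" unfolding inj_def by blast
  then show ?thesis
    by (metis less_imp_add_positive linorder_neqE_nat)
qed

text \<open>Right stability: if x = a x b then some positive power of b fixes x on the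
  right, since the elements x b^k all lie J-above x and so must repeat.\<close>
lemma right_stable:
  assumes fin: "finite_J_above TYPE('a::semigroup_mult)"
    and x: "(x :: 'a option) = a * x * b"
  shows "\<exists>d>0. x = x * b ^ d"
proof -
  have it: "x = a ^ k * (x * b ^ k)" for k
    unfolding mult.assoc[symmetric] using x by (rule two_sided_iterate)
  have "J_le x (x * b ^ k)" for k
    unfolding J_le_iff using it[of k] by (metis mult_1_right)
  then have "range (\<lambda>k. x * b ^ k) \<subseteq> {y. J_le x y}" by blast
  then have "finite (range (\<lambda>k. x * b ^ k))"
    using finite_J_above_option[OF fin] by (rule finite_subset)
  then obtain i d where d: "0 < d" "x * b ^ i = x * b ^ (i + d)"
    using finite_range_repeats by blast
  have "x = a ^ i * (x * b ^ i)" by (fact it)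
  also have "\<dots> = a ^ i * (x * b ^ (i + d))" by (simp only: d(2))
  also have "\<dots> = (a ^ i * (x * b ^ i)) * b ^ d" by (simp add: power_add mult.assoc)
  also have "\<dots> = x * b ^ d" by (simp only: it[of i, symmetric])
  finally show ?thesis using d(1) by blast
qed

lemma left_stable:
  assumes fin: "finite_J_above TYPE('a::semigroup_mult)"
    and x: "(x :: 'a option) = a * x * b"
  shows "\<exists>d>0. x = a ^ d * x"
proof -
  have it: "x = (a ^ k * x) * b ^ k" for k
    using x by (rule two_sided_iterate)
  have "J_le x (a ^ k * x)" for k
    unfolding J_le_iff using it[of k] by (metis mult_1_left)
  then have "range (\<lambda>k. a ^ k * x) \<subseteq> {y. J_le x y}" by blast
  then have "finite (range (\<lambda>k. a ^ k * x))"
    using finite_J_above_option[OF fin] by (rule finite_subset)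
  then obtain i d where d: "0 < d" "a ^ i * x = a ^ (i + d) * x"
    using finite_range_repeats by blast
  have "x = (a ^ i * x) * b ^ i" by (fact it)
  also have "\<dots> = (a ^ (i + d) * x) * b ^ i" by (simp only: d(2))
  also have "\<dots> = a ^ d * ((a ^ i * x) * b ^ i)" by (simp add: add.commute[of i d] power_add mult.assoc)
  also have "\<dots> = a ^ d * x" by (simp only: it[of i, symmetric])
  finally show ?thesis using d(1) by blast
qed

lemma J_le_right_multiple_imp_R:
  assumes fin: "finite_J_above TYPE('a::semigroup_mult)"
    and "J_le (x :: 'a option) (x * y)"
  shows "R_rel x (x * y)"
proof -
  obtain s t where "x = s * (x * y) * t" using assms(2) unfolding J_le_iff by blast
  also have "\<dots> = s * x * (y * t)" by (simp only: mult.assoc)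
  finally have "x = s * x * (y * t)" .
  from right_stable[OF fin this] obtain d where "0 < d" and x: "x = x * (y * t) ^ d" by blast
  from \<open>0 < d\<close> obtain e where "d = Suc e" using gr0_conv_Suc by blast
  note x
  also have "x * (y * t) ^ d = x * y * (t * (y * t) ^ e)" by (simp add: \<open>d = Suc e\<close> mult.assoc)
  finally have "x * y * (t * (y * t) ^ e) = x" by (rule sym)
  then show ?thesis unfolding R_rel_iff by blast
qed

lemma J_le_left_multiple_imp_L:
  assumes fin: "finite_J_above TYPE('a::semigroup_mult)"
    and "J_le (x :: 'a option) (y * x)"
  shows "L_rel x (y * x)"
proof -
  obtain s t where "x = s * (y * x) * t" using assms(2) unfolding J_le_iff by blast
  also have "\<dots> = (s * y) * x * t" by (simp only: mult.assoc)
  finally have "x = (s * y) * x * t" .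
  from left_stable[OF fin this] obtain d where "0 < d" and x: "x = (s * y) ^ d * x" by blast
  from \<open>0 < d\<close> obtain e where "d = Suc e" using gr0_conv_Suc by blast
  note x
  also have "(s * y) ^ d * x = ((s * y) ^ e * s) * (y * x)"
    by (simp only: \<open>d = Suc e\<close> power_Suc2 mult.assoc)
  finally have "((s * y) ^ e * s) * (y * x) = x" by (rule sym)
  then show ?thesis unfolding L_rel_iff by blast
qed

text \<open>In a stable monoid J is contained in the composite of R and L (indeed J = D):
  if n = s m t then m R m t and m t L n.\<close>
lemma J_rel_imp_R_then_L:
  assumes fin: "finite_J_above TYPE('a::semigroup_mult)"
    and "J_rel (m :: 'a option) n"
  obtains p where "R_rel m p" "L_rel p n"
proof -
  obtain s t where n: "n = s * m * t" using assms(2) unfolding J_rel_def J_le_iff by blast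
  obtain u v where m: "m = u * n * v" using assms(2) unfolding J_rel_def J_le_iff by blast
  have "m = u * n * v" by (fact m)
  also have "\<dots> = (u * s) * (m * t) * v" by (simp add: n mult.assoc)
  finally have "J_le m (m * t)" unfolding J_le_iff by metis
  then have "R_rel m (m * t)" by (rule J_le_right_multiple_imp_R[OF fin])
  moreover have "L_rel (m * t) n"
  proof -
    have "m * t = u * n * v * t" by (simp add: m)
    also have "\<dots> = u * (s * (m * t)) * (v * t)" by (simp add: n mult.assoc)
    finally have "J_le (m * t) (s * (m * t))" unfolding J_le_iff by metis
    then have "L_rel (m * t) (s * (m * t))" by (rule J_le_left_multiple_imp_L[OF fin])
    also have "s * (m * t) = n" by (simp add: n mult.assoc)
    finally show ?thesis .
  qed
  ultimately show thesis by (rule that)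
qed

section \<open>Closure properties of W(M^I)\<close>

text \<open>W is closed under R: an element L-related to p is moved along m R p to
  an element L-related to m, where membership of m in W applies.\<close>
lemma W_set_closed_R:
  assumes "m \<in> W_set" "R_rel m p"
  shows "p \<in> W_set"
  unfolding W_set_iff
proof (intro allI impI)
  fix y assume "L_rel y p"
  then obtain w w' where w: "y = w * p" and w': "p = w' * y" unfolding L_rel_iff by metis
  obtain t t' where t: "p = m * t" and t': "m = p * t'" using assms(2) unfolding R_rel_iff by metis
  have wm: "w * m = y * t'" by (simp add: t' w mult.assoc)
  have "w' * (y * t') = m" by (simp add: t' w' mult.assoc)
  with wm have "L_rel (y * t') m" unfolding L_rel_iff by blast
  then have "R_rel (y * t') m" using assms(1) by (simp add: W_set_iff)
  then obtain c c' where c: "m = y * t' * c" and c': "y * t' = m * c'"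
    unfolding R_rel_iff by metis
  have "y = w * p" by (fact w)
  also have "\<dots> = (w * m) * t" by (simp add: t mult.assoc)
  also have "\<dots> = (m * c') * t" by (simp add: wm c')
  also have "\<dots> = p * (t' * c' * t)" by (simp add: t' mult.assoc)
  finally have "p * (t' * c' * t) = y" by (rule sym)
  moreover have "y * (t' * c * t) = p" by (simp add: t c mult.assoc)
  ultimately show "R_rel y p" unfolding R_rel_iff by blast
qed

lemma W_set_closed_L:
  assumes "p \<in> W_set" "L_rel p n"
  shows "n \<in> W_set"
  unfolding W_set_iff
proof (intro allI impI)
  fix y assume "L_rel y n"
  then have "R_rel y p" using assms L_rel_sym L_rel_trans by (metis W_set_iff)
  moreover have "R_rel p n" using assms L_rel_sym R_rel_sym by (metis W_set_iff)
  ultimately show "R_rel y n" by (rule R_rel_trans)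
qed

theorem lemma8p4:
  assumes "finite_J_above TYPE('a::semigroup_mult)"
  shows "\<forall>m n :: 'a option. m \<in> W_set \<and> J_rel m n \<longrightarrow> n \<in> W_set"
proof (intro allI impI)
  fix m n :: "'a option"
  assume "m \<in> W_set \<and> J_rel m n"
  then obtain p where "m \<in> W_set" "R_rel m p" "L_rel p n"
    using J_rel_imp_R_then_L[OF assms] by blast
  then show "n \<in> W_set" using W_set_closed_R W_set_closed_L by blast
qed

end
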